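(* Let $f:\mathbb{R}^d\to\mathbb{R}$ be convex and $L$-smooth ($L>0$), and suppose $f$ has at least one minimizer; let $\mathbf{x}^\star$ be any minimizer of $f$. Let $(\sigma_n)_{n\ge 1}$ be a sequence of positive real numbers, let $\mathbf{x}_0\in\mathbb{R}^d$, let $0<t\le \frac1L$, and define the GSmoothGD iterates $$\mathbf{x}_{k+1}=\mathbf{x}_k-t\,\nabla f_{\sigma_{k+1}}(\mathbf{x}_k),\qquad k\ge 0.$$ Then for every $k\ge 1$, $$f(\mathbf{x}_k)-f(\mathbf{x}^\star)\le \frac{\|\mathbf{x}_0-\mathbf{x}^\star\|^2}{2tk}+\frac{Ld}{4k}\left(\sum_{i=1}^{k}\sigma_i^2+\sum_{i=2}^{k} i\,\max\big(0,\sigma_i^2-\sigma_{i-1}^2\big)\right).$$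
   Context: For a measurable $f:\mathbb{R}^d\to\mathbb{R}$ and $\sigma>0$, the Gaussian smoothing of $f$ with radius $\sigma$ is $f_\sigma(\mathbf{x})=\pi^{-d/2}\int_{\mathbb{R}^d} f(\mathbf{x}+\sigma\mathbf{u})\,e^{-\|\mathbf{u}\|_2^2}\,d\mathbf{u}$ (equivalently $\mathbb{E}_{\mathbf{u}\sim\mathcal N(0,I_d)}[f(\mathbf{x}+\sigma\sqrt2\,\mathbf{u})]$), and $f_0=f$. A function is $L$-smooth if it is differentiable and its gradient is $L$-Lipschitz in the Euclidean norm. *)

theory Defs
  imports "HOL-Analysis.Analysis"
begin

definition gauss_smooth :: "('a::euclidean_space \<Rightarrow> real) \<Rightarrow> real \<Rightarrow> 'a \<Rightarrow> real" where
  "gauss_smooth f \<sigma> x =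
     (if \<sigma> = 0 then f x
      else pi powr (- real DIM('a) / 2) *
           (\<integral>u. f (x + \<sigma> *\<^sub>R u) * exp (- (norm u)\<^sup>2) \<partial>lborel))"

definition grad :: "('a::euclidean_space \<Rightarrow> real) \<Rightarrow> 'a \<Rightarrow> 'a" where
  "grad F x = (SOME g. (F has_derivative (\<lambda>h. g \<bullet> h)) (at x))"

definition L_smooth :: "real \<Rightarrow> ('a::euclidean_space \<Rightarrow> real) \<Rightarrow> bool" where
  "L_smooth L f \<longleftrightarrow> (\<forall>x. f differentiable (at x)) \<and>
     (\<forall>x y. norm (grad f x - grad f y) \<le> L * norm (x - y))"

end

theory Submission
  imports Defs "HOL-Probability.Probability"
begin

text \<open>The smoothed function f_\<sigma>(x) = E f(x + \<sigma>u), with u normal, is again convex and L-smooth,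
  its gradient is E \<nabla>f(x + \<sigma>u), and f \<le> f_\<sigma> \<le> f + Ld\<sigma>\<twosuperior>/4. Expanding f(x + h + \<tau>u) to first
  order around x + \<sigma>u, in the centre and in the radius simultaneously, moreover gives
  f_\<tau> \<le> f_\<sigma> + Ld/4 max(0, \<tau>\<twosuperior> - \<sigma>\<twosuperior>). GSmoothGD is therefore plain gradient descent on a slowly
  changing objective: every step decreases the current objective and satisfies the usual
  distance inequality, and each increase of the radius is paid for once for every later
  iterate, which produces the weights i.\<close>

section \<open>Gradients and convex functions with Lipschitz gradient\<close>

lemma linear_functional_eq_inner:
  fixes l :: "'a::euclidean_space \<Rightarrow> real"
  assumes "linear l"
  shows "l = (\<lambda>h. adjoint l 1 \<bullet> h)"
  using adjoint_works[OF assms, of _ 1] by (auto simp: inner_commute)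

lemma grad_has_derivative:
  fixes F :: "'a::euclidean_space \<Rightarrow> real"
  assumes "F differentiable (at x)"
  shows "(F has_derivative (\<lambda>h. grad F x \<bullet> h)) (at x)"
proof -
  obtain l where l: "(F has_derivative l) (at x)"
    using assms differentiable_def by blast
  then have "(F has_derivative (\<lambda>h. adjoint l 1 \<bullet> h)) (at x)"
    using linear_functional_eq_inner[OF has_derivative_linear] by metis
  then show ?thesis
    unfolding grad_def by (rule someI)
qed

lemma grad_eqI:
  fixes F :: "'a::euclidean_space \<Rightarrow> real"
  assumes "(F has_derivative (\<lambda>h. v \<bullet> h)) (at x)"
  shows "grad F x = v"
proof -
  have "(F has_derivative (\<lambda>h. grad F x \<bullet> h)) (at x)"
    using assms grad_has_derivative differentiableI by blast
  then have "(\<lambda>h. grad F x \<bullet> h) = (\<lambda>h. v \<bullet> h)"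
    using has_derivative_unique assms by blast
  then have "(grad F x - v) \<bullet> (grad F x - v) = 0"
    by (metis inner_diff_left diff_self)
  then show ?thesis by simp
qed

lemma has_derivative_of_quadratic_sandwich:
  fixes g :: "'a::real_inner \<Rightarrow> real"
  assumes lower: "\<And>h. g x + G \<bullet> h \<le> g (x + h)"
    and upper: "\<And>h. g (x + h) \<le> g x + G \<bullet> h + L / 2 * (norm h)\<^sup>2"
  shows "(g has_derivative (\<lambda>h. G \<bullet> h)) (at x)"
  unfolding has_derivative_at'
proof (intro conjI allI impI bounded_linear_inner_right)
  fix e :: real assume "0 < e"
  define d where "d = e / (\<bar>L\<bar> / 2 + 1)"
  have "0 < d" using \<open>0 < e\<close> by (simp add: d_def add_pos_nonneg)
  moreover have "norm (g y - g x - G \<bullet> (y - x)) / norm (y - x) < e"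
    if y: "0 < norm (y - x)" "norm (y - x) < d" for y
  proof -
    define h where "h = y - x"
    have "L / 2 * (norm h)\<^sup>2 \<le> \<bar>L\<bar> / 2 * (norm h)\<^sup>2"
      by (intro mult_right_mono) auto
    then have "\<bar>g (x + h) - g x - G \<bullet> h\<bar> \<le> \<bar>L\<bar> / 2 * (norm h)\<^sup>2"
      unfolding abs_le_iff using lower[of h] upper[of h] by linarith
    then have "\<bar>g (x + h) - g x - G \<bullet> h\<bar> / norm h \<le> \<bar>L\<bar> / 2 * norm h"
      using y by (simp add: h_def divide_le_eq power2_eq_square mult_ac)
    also have "\<dots> \<le> \<bar>L\<bar> / 2 * d"
      using y by (intro mult_left_mono) (auto simp: h_def)
    also have "\<dots> < (\<bar>L\<bar> / 2 + 1) * d"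
      using \<open>0 < d\<close> by (simp add: distrib_right)
    also have "\<dots> = e" by (simp add: d_def)
    finally show ?thesis by (simp add: h_def)
  qed
  ultimately show "\<exists>d>0. \<forall>y. 0 < norm (y - x) \<and> norm (y - x) < d \<longrightarrow>
          norm (g y - g x - G \<bullet> (y - x)) / norm (y - x) < e"
    by blast
qed

lemma has_derivative_along_line:
  fixes f :: "'a::real_inner \<Rightarrow> real"
  assumes "\<And>x. (f has_derivative (\<lambda>h. D x \<bullet> h)) (at x)"
  shows "((\<lambda>s. f (x + s *\<^sub>R h)) has_real_derivative (D (x + s *\<^sub>R h) \<bullet> h)) (at s within S)"
proof -
  have "((\<lambda>s. x + s *\<^sub>R h) has_derivative (\<lambda>s. s *\<^sub>R h)) (at s within S)"
    by (intro derivative_eq_intros) auto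
  from has_derivative_compose[OF this assms]
  have "((\<lambda>s. f (x + s *\<^sub>R h)) has_derivative (\<lambda>r. D (x + s *\<^sub>R h) \<bullet> (r *\<^sub>R h))) (at s within S)"
    by (simp add: o_def)
  moreover have "(\<lambda>r. D (x + s *\<^sub>R h) \<bullet> (r *\<^sub>R h)) = (*) (D (x + s *\<^sub>R h) \<bullet> h)"
    by (auto simp: fun_eq_iff)
  ultimately show ?thesis
    by (simp add: has_field_derivative_def)
qed

lemma convex_on_gradient_inequality:
  fixes f :: "'a::real_inner \<Rightarrow> real"
  assumes conv: "convex_on UNIV f"
    and der: "\<And>x. (f has_derivative (\<lambda>h. D x \<bullet> h)) (at x)"
  shows "f x + D x \<bullet> (y - x) \<le> f y"
proof -
  define h where "h = y - x"
  define \<phi> where "\<phi> s = f (x + s *\<^sub>R h)" for s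
  have "(\<phi> has_real_derivative (D x \<bullet> h)) (at 0 within {0<..})"
    using has_derivative_along_line[OF der, of x h 0] unfolding \<phi>_def by simp
  then have "((\<lambda>s. (\<phi> s - \<phi> 0) / (s - 0)) \<longlongrightarrow> D x \<bullet> h) (at_right 0)"
    using has_field_derivative_iff by blast
  moreover have "eventually (\<lambda>s. (\<phi> s - \<phi> 0) / (s - 0) \<le> f y - f x) (at_right 0)"
    using eventually_at_right_real[OF zero_less_one]
  proof eventually_elim
    case (elim s)
    have "x + s *\<^sub>R h = (1 - s) *\<^sub>R x + s *\<^sub>R y"
      by (simp add: h_def algebra_simps)
    then have "\<phi> s \<le> (1 - s) * f x + s * f y"
      using convex_onD[OF conv, of s x y] elim unfolding \<phi>_def by simp
    then have "\<phi> s - \<phi> 0 \<le> s * (f y - f x)"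
      by (simp add: \<phi>_def algebra_simps)
    then show ?case
      using elim by (simp add: divide_le_eq mult.commute)
  qed
  ultimately have "D x \<bullet> h \<le> f y - f x"
    by (rule tendsto_upperbound) simp
  then show ?thesis by (simp add: h_def)
qed

lemma convex_on_gradient_monotone:
  fixes f :: "'a::real_inner \<Rightarrow> real"
  assumes "convex_on UNIV f"
    and "\<And>x. (f has_derivative (\<lambda>h. D x \<bullet> h)) (at x)"
  shows "0 \<le> (D x - D y) \<bullet> (x - y)"
  using convex_on_gradient_inequality[OF assms, of x y] convex_on_gradient_inequality[OF assms, of y x]
  by (simp add: inner_diff_left inner_diff_right inner_commute)

lemma lipschitz_gradient_quadratic_upper_bound:
  fixes f :: "'a::real_inner \<Rightarrow> real"
  assumes der: "\<And>x. (f has_derivative (\<lambda>h. D x \<bullet> h)) (at x)"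
    and lip: "\<And>x y. norm (D x - D y) \<le> L * norm (x - y)"
  shows "f y \<le> f x + D x \<bullet> (y - x) + L / 2 * (norm (y - x))\<^sup>2"
proof -
  define h where "h = y - x"
  define \<psi> where "\<psi> s = f (x + s *\<^sub>R h) - s * (D x \<bullet> h) - L / 2 * s\<^sup>2 * (norm h)\<^sup>2" for s
  have "\<psi> 1 \<le> \<psi> 0"
  proof (rule DERIV_nonpos_imp_nonincreasing[of 0 1])
    fix s :: real assume s: "0 \<le> s" "s \<le> 1"
    let ?\<psi>' = "D (x + s *\<^sub>R h) \<bullet> h - D x \<bullet> h - L * s * (norm h)\<^sup>2"
    have "(\<psi> has_real_derivative ?\<psi>') (at s)"
      unfolding \<psi>_def[abs_def]
      by (rule has_derivative_along_line[OF der] derivative_eq_intros refl | simp)+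
    moreover have "?\<psi>' \<le> 0"
    proof -
      have "D (x + s *\<^sub>R h) \<bullet> h - D x \<bullet> h \<le> norm (D (x + s *\<^sub>R h) - D x) * norm h"
        by (metis inner_diff_left norm_cauchy_schwarz)
      also have "\<dots> \<le> L * norm (s *\<^sub>R h) * norm h"
        using lip[of "x + s *\<^sub>R h" x] by (intro mult_right_mono) auto
      also have "\<dots> = L * s * (norm h)\<^sup>2"
        using s by (simp add: power2_eq_square)
      finally show ?thesis by simp
    qed
    ultimately show "\<exists>y. (\<psi> has_real_derivative y) (at s) \<and> y \<le> 0" by blast
  qed simp
  then show ?thesis by (simp add: \<psi>_def h_def)
qed

lemma gradient_step_bounds:
  fixes g :: "'a::real_inner \<Rightarrow> real"
  assumes lower: "\<And>h. g y + G \<bullet> h \<le> g (y + h)"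
    and upper: "\<And>h. g (y + h) \<le> g y + G \<bullet> h + L / 2 * (norm h)\<^sup>2"
    and "0 < t" "L * t \<le> 1"
  shows "g (y - t *\<^sub>R G) \<le> g y - t / 2 * (norm G)\<^sup>2"
    and "g (y - t *\<^sub>R G) \<le> g z + ((norm (y - z))\<^sup>2 - (norm (y - t *\<^sub>R G - z))\<^sup>2) / (2 * t)"
proof -
  have "L / 2 * (norm (t *\<^sub>R G))\<^sup>2 = (L * t) * (t / 2 * (norm G)\<^sup>2)"
    using \<open>0 < t\<close> by (simp add: power2_eq_square)
  also have "\<dots> \<le> t / 2 * (norm G)\<^sup>2"
    using \<open>L * t \<le> 1\<close> \<open>0 < t\<close> mult_right_mono[of "L * t" 1 "t / 2 * (norm G)\<^sup>2"] by simp
  finally have "L / 2 * (norm (t *\<^sub>R G))\<^sup>2 \<le> t / 2 * (norm G)\<^sup>2" .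
  moreover have "G \<bullet> (t *\<^sub>R G) = t * (norm G)\<^sup>2"
    by (simp add: power2_norm_eq_inner)
  moreover have "g (y - t *\<^sub>R G) \<le> g y - G \<bullet> (t *\<^sub>R G) + L / 2 * (norm (t *\<^sub>R G))\<^sup>2"
    using upper[of "- (t *\<^sub>R G)"] by simp
  ultimately show descent: "g (y - t *\<^sub>R G) \<le> g y - t / 2 * (norm G)\<^sup>2"
    by linarith
  have "(norm (y - t *\<^sub>R G - z))\<^sup>2 = (norm (y - z))\<^sup>2 - 2 * t * (G \<bullet> (y - z)) + t\<^sup>2 * (norm G)\<^sup>2"
    unfolding power2_norm_eq_inner
    by (simp add: inner_diff_right inner_commute power2_eq_square algebra_simps)
  then have "((norm (y - z))\<^sup>2 - (norm (y - t *\<^sub>R G - z))\<^sup>2) / (2 * t) = G \<bullet> (y - z) - t / 2 * (norm G)\<^sup>2"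
    using \<open>0 < t\<close> by (simp add: field_simps power2_eq_square)
  then show "g (y - t *\<^sub>R G) \<le> g z + ((norm (y - z))\<^sup>2 - (norm (y - t *\<^sub>R G - z))\<^sup>2) / (2 * t)"
    using descent lower[of "z - y"] by (simp add: inner_diff_right)
qed

section \<open>The Gaussian measure\<close>

lemma nn_integral_exp_neg_square: "(\<integral>\<^sup>+y. ennreal (exp (- y\<^sup>2)) \<partial>lborel) = ennreal (sqrt pi)"
proof -
  have "has_bochner_integral lborel (\<lambda>y::real. exp (- y\<^sup>2) * y ^ (2 * 0)) (sqrt pi * (fact (2 * 0) / (2 ^ (2 * 0) * fact 0)))"
    using has_bochner_integral_even_function[OF gaussian_moment_even_pos[where k = 0]] by simp
  then show ?thesis
    by (simp add: nn_integral_eq_integral has_bochner_integral_iff)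
qed

lemma nn_integral_exp_neg_square_mult_square:
  "(\<integral>\<^sup>+y. ennreal (exp (- y\<^sup>2) * y\<^sup>2) \<partial>lborel) = ennreal (sqrt pi / 2)"
proof -
  have "has_bochner_integral lborel (\<lambda>y::real. exp (- y\<^sup>2) * y ^ (2 * 1)) (sqrt pi * (fact (2 * 1) / (2 ^ (2 * 1) * fact 1)))"
    using has_bochner_integral_even_function[OF gaussian_moment_even_pos[where k = 1]] by simp
  then show ?thesis
    by (simp add: nn_integral_eq_integral has_bochner_integral_iff)
qed

lemma norm_power2_eq_sum_Basis: "(norm u)\<^sup>2 = (\<Sum>b\<in>Basis. (u \<bullet> b)\<^sup>2)"
  unfolding power2_norm_eq_inner by (subst euclidean_inner) (simp add: power2_eq_square)

text \<open>The Gaussian weight factorises over the coordinates, so a weight depending on one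
  coordinate only reduces to a one-dimensional integral.\<close>
lemma nn_integral_exp_neg_norm_square_coordinate:
  fixes b :: "'a::euclidean_space"
  assumes b: "b \<in> Basis" and [measurable]: "w \<in> borel_measurable borel" and w: "\<And>y. 0 \<le> w y"
  shows "(\<integral>\<^sup>+u. ennreal (exp (- (norm u)\<^sup>2) * w (u \<bullet> b)) \<partial>(lborel :: 'a measure))
    = ennreal (sqrt pi) ^ (DIM('a) - 1) * (\<integral>\<^sup>+y. ennreal (exp (- y\<^sup>2) * w y) \<partial>lborel)"
proof -
  define W where "W b' y = ennreal (exp (- y\<^sup>2) * (if b' = b then w y else 1))" for b' y
  have "ennreal (exp (- (norm u)\<^sup>2) * w (u \<bullet> b)) = (\<Prod>b'\<in>Basis. W b' (u \<bullet> b'))" for u :: 'a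
  proof -
    have "exp (- (norm u)\<^sup>2) = (\<Prod>b'\<in>Basis. exp (- (u \<bullet> b')\<^sup>2))"
      by (simp add: norm_power2_eq_sum_Basis exp_sum sum_negf[symmetric])
    then show ?thesis
      using b w by (simp add: W_def prod_ennreal prod.distrib prod.delta flip: ennreal_mult)
  qed
  then have "(\<integral>\<^sup>+u. ennreal (exp (- (norm u)\<^sup>2) * w (u \<bullet> b)) \<partial>(lborel :: 'a measure))
      = (\<integral>\<^sup>+u. (\<Prod>b'\<in>Basis. W b' (u \<bullet> b')) \<partial>lborel)"
    by simp
  also have "\<dots> = (\<Prod>b'\<in>Basis. \<integral>\<^sup>+y. W b' y \<partial>lborel)"
    by (rule nn_integral_lborel_prod) (auto simp: W_def)
  also have "\<dots> = (\<integral>\<^sup>+y. W b y \<partial>lborel) * (\<Prod>b'\<in>Basis - {b}. \<integral>\<^sup>+y. W b' y \<partial>lborel)"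
    using b by (simp add: prod.remove)
  also have "\<dots> = (\<integral>\<^sup>+y. ennreal (exp (- y\<^sup>2) * w y) \<partial>lborel) * ennreal (sqrt pi) ^ (DIM('a) - 1)"
    using b by (simp add: W_def nn_integral_exp_neg_square card_Diff_singleton)
  finally show ?thesis by (simp add: mult.commute)
qed

lemma nn_integral_exp_neg_norm_square:
  "(\<integral>\<^sup>+u. ennreal (exp (- (norm u)\<^sup>2)) \<partial>(lborel :: 'a::euclidean_space measure))
    = ennreal (sqrt pi ^ DIM('a))"
proof -
  obtain b :: 'a where "b \<in> Basis" using nonempty_Basis by blast
  from nn_integral_exp_neg_norm_square_coordinate[OF this, of "\<lambda>_. 1"]
  show ?thesis
    by (simp add: nn_integral_exp_neg_square ennreal_power flip: power_Suc2 ennreal_mult)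
qed

lemma nn_integral_norm_square_exp_neg_norm_square:
  "(\<integral>\<^sup>+u. ennreal ((norm u)\<^sup>2 * exp (- (norm u)\<^sup>2)) \<partial>(lborel :: 'a::euclidean_space measure))
    = ennreal (real DIM('a) / 2 * sqrt pi ^ DIM('a))"
proof -
  have "ennreal ((norm u)\<^sup>2 * exp (- (norm u)\<^sup>2)) = (\<Sum>b\<in>Basis. ennreal (exp (- (norm u)\<^sup>2) * (u \<bullet> b)\<^sup>2))"
    for u :: 'a
  proof -
    have "(norm u)\<^sup>2 * exp (- (norm u)\<^sup>2) = (\<Sum>b\<in>Basis. exp (- (norm u)\<^sup>2) * (u \<bullet> b)\<^sup>2)"
      by (simp add: norm_power2_eq_sum_Basis[of u, symmetric] sum_distrib_left[symmetric] sum_distrib_right[symmetric] mult.commute)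
    then show ?thesis by (simp add: sum_ennreal)
  qed
  then have "(\<integral>\<^sup>+u. ennreal ((norm u)\<^sup>2 * exp (- (norm u)\<^sup>2)) \<partial>(lborel :: 'a measure))
      = (\<integral>\<^sup>+u. (\<Sum>b\<in>Basis. ennreal (exp (- (norm u)\<^sup>2) * (u \<bullet> b)\<^sup>2)) \<partial>(lborel :: 'a measure))"
    by simp
  also have "\<dots> = (\<Sum>b\<in>Basis. \<integral>\<^sup>+u. ennreal (exp (- (norm u)\<^sup>2) * (u \<bullet> b)\<^sup>2) \<partial>(lborel :: 'a measure))"
    by (rule nn_integral_sum) auto
  also have "\<dots> = (\<Sum>b\<in>(Basis :: 'a set). ennreal (sqrt pi) ^ (DIM('a) - 1) * ennreal (sqrt pi / 2))"
    using nn_integral_exp_neg_norm_square_coordinate[of _ "\<lambda>y. y\<^sup>2"]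
    by (intro sum.cong refl) (simp add: nn_integral_exp_neg_square_mult_square)
  also have "\<dots> = ennreal (real DIM('a) / 2 * sqrt pi ^ DIM('a))"
    by (simp add: ennreal_power ennreal_of_nat_eq_real_of_nat power_Suc2[symmetric] flip: ennreal_mult)
  finally show ?thesis .
qed

lemma pi_powr_neg_half_mult_sqrt_pi_power: "pi powr (- (real n / 2)) * sqrt pi ^ n = 1"
proof -
  have "sqrt pi ^ n = pi powr (real n / 2)"
    by (simp add: powr_half_sqrt[symmetric] powr_realpow[symmetric] powr_powr)
  then show ?thesis by (simp add: powr_add[symmetric])
qed

text \<open>The law of the noise in gauss_smooth: the normal distribution with covariance I/2,
  so that its second moment is half the dimension.\<close>
definition gauss_density :: "'a::euclidean_space \<Rightarrow> real" where
  "gauss_density u = pi powr (- real DIM('a) / 2) * exp (- (norm u)\<^sup>2)"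

definition gauss_measure :: "'a::euclidean_space measure" where
  "gauss_measure = density lborel (\<lambda>u. ennreal (gauss_density u))"

lemma gauss_density_nonneg: "0 \<le> gauss_density u"
  by (simp add: gauss_density_def)

lemma borel_measurable_gauss_density[measurable]: "gauss_density \<in> borel_measurable borel"
  unfolding gauss_density_def by measurable

lemma sets_gauss_measure[measurable_cong, simp]: "sets gauss_measure = sets borel"
  by (simp add: gauss_measure_def)

lemma space_gauss_measure[simp]: "space gauss_measure = UNIV"
  by (simp add: gauss_measure_def)

lemma nn_integral_gauss_measure:
  fixes g :: "'a::euclidean_space \<Rightarrow> ennreal"
  assumes [measurable]: "g \<in> borel_measurable borel"
  shows "(\<integral>\<^sup>+u. g u \<partial>gauss_measure) = (\<integral>\<^sup>+u. ennreal (gauss_density u) * g u \<partial>lborel)"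
  unfolding gauss_measure_def by (rule nn_integral_density) auto

lemma integral_gauss_measure:
  fixes g :: "'a::euclidean_space \<Rightarrow> real"
  assumes [measurable]: "g \<in> borel_measurable borel"
  shows "integral\<^sup>L gauss_measure g = (\<integral>u. gauss_density u * g u \<partial>lborel)"
  unfolding gauss_measure_def by (rule integral_real_density) (auto simp: gauss_density_nonneg)

lemma prob_space_gauss_measure: "prob_space (gauss_measure :: 'a::euclidean_space measure)"
proof
  have "emeasure (gauss_measure :: 'a measure) (space gauss_measure) = (\<integral>\<^sup>+u. 1 \<partial>(gauss_measure :: 'a measure))"
    by simp
  also have "\<dots> = (\<integral>\<^sup>+u. ennreal (pi powr (- real DIM('a) / 2)) * ennreal (exp (- (norm u)\<^sup>2)) \<partial>(lborel :: 'a measure))"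
    by (subst nn_integral_gauss_measure) (auto simp: gauss_density_def ennreal_mult intro!: nn_integral_cong)
  also have "\<dots> = ennreal (pi powr (- real DIM('a) / 2)) * ennreal (sqrt pi ^ DIM('a))"
    by (subst nn_integral_cmult) (auto simp: nn_integral_exp_neg_norm_square)
  also have "\<dots> = 1"
    by (simp add: pi_powr_neg_half_mult_sqrt_pi_power flip: ennreal_mult)
  finally show "emeasure (gauss_measure :: 'a measure) (space gauss_measure) = 1" .
qed

lemma has_bochner_integral_gauss_measure_norm_power2:
  "has_bochner_integral (gauss_measure :: 'a::euclidean_space measure) (\<lambda>u. (norm u)\<^sup>2) (real DIM('a) / 2)"
proof (rule has_bochner_integral_nn_integral)
  have "(\<integral>\<^sup>+u. ennreal ((norm u)\<^sup>2) \<partial>(gauss_measure :: 'a measure))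
      = (\<integral>\<^sup>+u. ennreal (pi powr (- real DIM('a) / 2)) * ennreal ((norm u)\<^sup>2 * exp (- (norm u)\<^sup>2)) \<partial>(lborel :: 'a measure))"
    by (subst nn_integral_gauss_measure) (auto simp: gauss_density_def ennreal_mult' mult_ac intro!: nn_integral_cong)
  also have "\<dots> = ennreal (pi powr (- real DIM('a) / 2)) * ennreal (real DIM('a) / 2 * sqrt pi ^ DIM('a))"
    by (subst nn_integral_cmult) (auto simp: nn_integral_norm_square_exp_neg_norm_square)
  also have "\<dots> = ennreal (real DIM('a) / 2)"
    using pi_powr_neg_half_mult_sqrt_pi_power[of "DIM('a)"] by (simp add: mult_ac flip: ennreal_mult)
  finally show "(\<integral>\<^sup>+u. ennreal ((norm u)\<^sup>2) \<partial>(gauss_measure :: 'a measure)) = ennreal (real DIM('a) / 2)" .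
qed auto

lemma integrable_gauss_measure_const[simp]: "integrable gauss_measure (\<lambda>_. c :: real)"
  using prob_space.finite_measure[OF prob_space_gauss_measure] by (rule finite_measure.integrable_const)

lemma measure_gauss_measure_UNIV[simp]: "measure (gauss_measure :: 'a::euclidean_space measure) UNIV = 1"
  using prob_space.prob_space[OF prob_space_gauss_measure[where 'a = 'a]] by simp

lemma integrable_gauss_measure_norm_power2[simp]: "integrable gauss_measure (\<lambda>u. (norm u)\<^sup>2)"
  using has_bochner_integral_gauss_measure_norm_power2 has_bochner_integral_iff by blast

lemma integral_gauss_measure_norm_power2[simp]:
  "integral\<^sup>L (gauss_measure :: 'a::euclidean_space measure) (\<lambda>u. (norm u)\<^sup>2) = real DIM('a) / 2"
  using has_bochner_integral_gauss_measure_norm_power2 has_bochner_integral_iff by blast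

lemma integrable_gauss_measure_norm[simp]: "integrable gauss_measure norm"
proof (rule Bochner_Integration.integrable_bound)
  show "integrable gauss_measure (\<lambda>u. 1 + (norm u)\<^sup>2)" by simp
  show "AE u in gauss_measure. norm (norm u) \<le> norm (1 + (norm u)\<^sup>2)"
  proof (rule AE_I2)
    fix u
    have "0 \<le> (norm u - 1)\<^sup>2" by simp
    then have "2 * norm u \<le> 1 + (norm u)\<^sup>2" by (simp add: power2_diff)
    then have "norm u \<le> 1 + (norm u)\<^sup>2" using norm_ge_zero[of u] by linarith
    then show "norm (norm u) \<le> norm (1 + (norm u)\<^sup>2)" by simp
  qed
qed simp

lemma integrable_gauss_measure_quadratic_bound:
  fixes g :: "'a::euclidean_space \<Rightarrow> 'b::{banach, second_countable_topology}"
  assumes [measurable]: "g \<in> borel_measurable borel"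
    and bound: "\<And>u. norm (g u) \<le> a + b * norm u + c * (norm u)\<^sup>2"
  shows "integrable gauss_measure g"
proof (rule Bochner_Integration.integrable_bound)
  show "integrable gauss_measure (\<lambda>u. a + b * norm u + c * (norm u)\<^sup>2)" by simp
  show "AE u in gauss_measure. norm (g u) \<le> norm (a + b * norm u + c * (norm u)\<^sup>2)"
    using order_trans[OF bound abs_ge_self] by simp
qed simp

lemma integrable_gauss_measure_inner[simp]: "integrable gauss_measure (\<lambda>u. v \<bullet> u)"
  by (rule integrable_gauss_measure_quadratic_bound[where a = 0 and b = "norm v" and c = 0])
    (auto simp: Cauchy_Schwarz_ineq2)

lemma distr_lborel_uminus: "distr lborel borel uminus = (lborel :: 'a::euclidean_space measure)"
proof -
  have "(lborel :: 'a measure) = density (distr lborel borel uminus) (\<lambda>_. 1)"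
    using lborel_affine[of "-1" "0::'a"] by simp
  then show ?thesis by (metis density_1)
qed

lemma integral_gauss_measure_inner[simp]:
  "integral\<^sup>L (gauss_measure :: 'a::euclidean_space measure) (\<lambda>u. v \<bullet> u) = 0"
proof -
  have [measurable]: "(\<lambda>u::'a. v \<bullet> u) \<in> borel_measurable borel" by measurable
  have "integral\<^sup>L gauss_measure (\<lambda>u. v \<bullet> u) = (\<integral>u. gauss_density u * (v \<bullet> u) \<partial>(lborel :: 'a measure))"
    by (rule integral_gauss_measure) simp
  also have "\<dots> = (\<integral>u. gauss_density u * (v \<bullet> u) \<partial>distr lborel borel uminus)"
    by (simp add: distr_lborel_uminus)
  also have "\<dots> = - (\<integral>u. gauss_density u * (v \<bullet> u) \<partial>lborel)"
    by (subst integral_distr) (auto simp: gauss_density_def)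
  finally show ?thesis
    by (simp add: integral_gauss_measure)
qed

lemma gauss_smooth_eq_integral_gauss_measure:
  fixes f :: "'a::euclidean_space \<Rightarrow> real"
  assumes [measurable]: "f \<in> borel_measurable borel" and "\<sigma> \<noteq> 0"
  shows "gauss_smooth f \<sigma> x = integral\<^sup>L gauss_measure (\<lambda>u. f (x + \<sigma> *\<^sub>R u))"
proof -
  have "gauss_smooth f \<sigma> x = (\<integral>u. pi powr (- real DIM('a) / 2) * (f (x + \<sigma> *\<^sub>R u) * exp (- (norm u)\<^sup>2)) \<partial>lborel)"
    using \<open>\<sigma> \<noteq> 0\<close> by (simp add: gauss_smooth_def)
  also have "\<dots> = (\<integral>u. gauss_density u * f (x + \<sigma> *\<^sub>R u) \<partial>lborel)"
    by (simp add: gauss_density_def mult_ac)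
  finally show ?thesis
    by (simp add: integral_gauss_measure)
qed

text \<open>Since the values decrease along the iterates, the last value bounds each earlier one
  up to the accumulated changes of the objective; this is where the weights i come from.\<close>
lemma telescoping_descent_bound:
  fixes g :: "nat \<Rightarrow> 'a::real_normed_vector \<Rightarrow> real" and x :: "nat \<Rightarrow> 'a"
  assumes descent: "\<And>j. g (Suc j) (x (Suc j)) \<le> g (Suc j) (x j)"
    and distance: "\<And>j. g (Suc j) (x (Suc j))
      \<le> g (Suc j) z + ((norm (x j - z))\<^sup>2 - (norm (x (Suc j) - z))\<^sup>2) / (2 * t)"
    and change: "\<And>i y. 1 \<le> i \<Longrightarrow> g (Suc i) y \<le> g i y + c (Suc i)"
    and c_nonneg: "\<And>i. 0 \<le> c i"
    and "0 < t" "1 \<le> k"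
  shows "real k * g k (x k) \<le> (\<Sum>i=1..k. g i z) + (norm (x 0 - z))\<^sup>2 / (2 * t) + (\<Sum>i=2..k. real i * c i)"
proof -
  define N where "N j = (norm (x j - z))\<^sup>2 / (2 * t)" for j
  have sum_bound: "(\<Sum>i=1..n. g i (x i)) \<le> (\<Sum>i=1..n. g i z) + N 0 - N n" for n
  proof (induction n)
    case (Suc n)
    have "g (Suc n) (x (Suc n)) \<le> g (Suc n) z + N n - N (Suc n)"
      using distance[of n] by (simp add: N_def diff_divide_distrib)
    then show ?case
      using Suc by simp
  qed simp
  have weighted: "real n * g n (x n) \<le> (\<Sum>i=1..n. g i (x i)) + (\<Sum>i=2..n. (real i - 1) * c i)"
    if "1 \<le> n" for n
    using that
  proof (induction n rule: dec_induct)
    case (step n)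
    have "g (Suc n) (x (Suc n)) \<le> g n (x n) + c (Suc n)"
      using descent[of n] change[OF step(1), of "x n"] by linarith
    then have "real n * g (Suc n) (x (Suc n)) \<le> real n * g n (x n) + real n * c (Suc n)"
      by (metis distrib_left mult_left_mono of_nat_0_le_iff)
    moreover have "(\<Sum>i=2..Suc n. (real i - 1) * c i) = (\<Sum>i=2..n. (real i - 1) * c i) + real n * c (Suc n)"
      using step(1) by (simp add: sum.cl_ivl_Suc)
    ultimately show ?case
      using step(3) by (simp add: distrib_right)
  qed simp
  have "(\<Sum>i=2..k. (real i - 1) * c i) \<le> (\<Sum>i=2..k. real i * c i)"
    using c_nonneg by (intro sum_mono) (simp add: algebra_simps)
  moreover have "0 \<le> N k"
    using \<open>0 < t\<close> by (simp add: N_def)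
  ultimately show ?thesis
    using sum_bound[of k] weighted[OF \<open>1 \<le> k\<close>] by (simp add: N_def)
qed

section \<open>Gaussian smoothing of a convex function with Lipschitz gradient\<close>

locale convex_lipschitz_gradient =
  fixes f :: "'a::euclidean_space \<Rightarrow> real" and D :: "'a \<Rightarrow> 'a" and L :: real
  assumes convex: "convex_on UNIV f"
    and has_derivative: "\<And>x. (f has_derivative (\<lambda>h. D x \<bullet> h)) (at x)"
    and lipschitz: "\<And>x y. norm (D x - D y) \<le> L * norm (x - y)"
    and L_nonneg: "0 \<le> L"
begin

lemma gradient_inequality: "f x + D x \<bullet> (y - x) \<le> f y"
  by (rule convex_on_gradient_inequality[OF convex has_derivative])

lemma quadratic_upper_bound: "f y \<le> f x + D x \<bullet> (y - x) + L / 2 * (norm (y - x))\<^sup>2"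
  by (rule lipschitz_gradient_quadratic_upper_bound[OF has_derivative lipschitz])

lemma borel_measurable_f[measurable]: "f \<in> borel_measurable borel"
proof -
  have "isCont f x" for x
    using has_derivative[of x] by (rule has_derivative_continuous)
  then show ?thesis
    by (intro borel_measurable_continuous_onI continuous_at_imp_continuous_on) auto
qed

lemma borel_measurable_D[measurable]: "D \<in> borel_measurable borel"
proof -
  have "lipschitz_on L UNIV D"
    using lipschitz L_nonneg by (simp add: lipschitz_on_def dist_norm)
  then show ?thesis
    using lipschitz_on_continuous_on borel_measurable_continuous_onI by blast
qed

lemma norm_D_le: "norm (D (x + w)) \<le> norm (D x) + L * norm w"
  using norm_triangle_ineq[of "D x" "D (x + w) - D x"] lipschitz[of "x + w" x] by simp

lemma integrable_f_shift: "integrable gauss_measure (\<lambda>u. f (x + \<sigma> *\<^sub>R u))"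
proof (rule integrable_gauss_measure_quadratic_bound)
  fix u :: 'a
  define w where "w = \<sigma> *\<^sub>R u"
  have "\<bar>f (x + w)\<bar> \<le> \<bar>f x\<bar> + norm (D x) * norm w + L / 2 * (norm w)\<^sup>2"
    using gradient_inequality[of x "x + w"] quadratic_upper_bound[of "x + w" x]
      Cauchy_Schwarz_ineq2[of "D x" w] L_nonneg zero_le_power2[of "norm w"]
    by simp
  then show "norm (f (x + \<sigma> *\<^sub>R u)) \<le> \<bar>f x\<bar> + norm (D x) * \<bar>\<sigma>\<bar> * norm u + L / 2 * \<sigma>\<^sup>2 * (norm u)\<^sup>2"
    by (simp add: w_def power_mult_distrib mult_ac)
qed simp

lemma integrable_D_shift: "integrable gauss_measure (\<lambda>u. D (x + \<sigma> *\<^sub>R u))"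
proof (rule integrable_gauss_measure_quadratic_bound)
  fix u
  show "norm (D (x + \<sigma> *\<^sub>R u)) \<le> norm (D x) + L * \<bar>\<sigma>\<bar> * norm u + 0 * (norm u)\<^sup>2"
    using norm_D_le[of x "\<sigma> *\<^sub>R u"] by (simp add: mult_ac)
qed simp

lemma integrable_D_shift_inner: "integrable gauss_measure (\<lambda>u. D (x + \<sigma> *\<^sub>R u) \<bullet> u)"
proof (rule integrable_gauss_measure_quadratic_bound)
  fix u
  have "\<bar>D (x + \<sigma> *\<^sub>R u) \<bullet> u\<bar> \<le> norm (D (x + \<sigma> *\<^sub>R u)) * norm u"
    by (rule Cauchy_Schwarz_ineq2)
  also have "\<dots> \<le> (norm (D x) + L * (\<bar>\<sigma>\<bar> * norm u)) * norm u"
    using norm_D_le[of x "\<sigma> *\<^sub>R u"] by (intro mult_right_mono) auto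
  finally show "norm (D (x + \<sigma> *\<^sub>R u) \<bullet> u) \<le> 0 + norm (D x) * norm u + L * \<bar>\<sigma>\<bar> * (norm u)\<^sup>2"
    by (simp add: algebra_simps power2_eq_square)
qed simp

definition smoothed :: "real \<Rightarrow> 'a \<Rightarrow> real" where
  "smoothed \<sigma> x = integral\<^sup>L gauss_measure (\<lambda>u. f (x + \<sigma> *\<^sub>R u))"

definition smoothed_gradient :: "real \<Rightarrow> 'a \<Rightarrow> 'a" where
  "smoothed_gradient \<sigma> x = integral\<^sup>L gauss_measure (\<lambda>u. D (x + \<sigma> *\<^sub>R u))"

text \<open>Formally the derivative of smoothed \<sigma> x with respect to \<sigma>.\<close>
definition radius_slope :: "real \<Rightarrow> 'a \<Rightarrow> real" where
  "radius_slope \<sigma> x = integral\<^sup>L gauss_measure (\<lambda>u. D (x + \<sigma> *\<^sub>R u) \<bullet> u)"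

lemma
  shows integrable_first_order: "integrable gauss_measure (\<lambda>u. f (x + \<sigma> *\<^sub>R u) + D (x + \<sigma> *\<^sub>R u) \<bullet> (h + c *\<^sub>R u))"
    and integral_first_order: "integral\<^sup>L gauss_measure (\<lambda>u. f (x + \<sigma> *\<^sub>R u) + D (x + \<sigma> *\<^sub>R u) \<bullet> (h + c *\<^sub>R u))
      = smoothed \<sigma> x + smoothed_gradient \<sigma> x \<bullet> h + c * radius_slope \<sigma> x"
  using integrable_f_shift integrable_D_shift integrable_D_shift_inner
  by (simp_all add: inner_add_right smoothed_def smoothed_gradient_def radius_slope_def)

lemma smoothed_first_order_lower:
  "smoothed \<sigma> x + smoothed_gradient \<sigma> x \<bullet> h + (\<tau> - \<sigma>) * radius_slope \<sigma> x \<le> smoothed \<tau> (x + h)"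
proof -
  have "f (x + \<sigma> *\<^sub>R u) + D (x + \<sigma> *\<^sub>R u) \<bullet> (h + (\<tau> - \<sigma>) *\<^sub>R u) \<le> f (x + h + \<tau> *\<^sub>R u)" for u
    using gradient_inequality[of "x + \<sigma> *\<^sub>R u" "x + h + \<tau> *\<^sub>R u"] by (simp add: algebra_simps)
  then show ?thesis
    using integral_mono[OF integrable_first_order integrable_f_shift]
    by (simp add: integral_first_order smoothed_def)
qed

lemma smoothed_first_order_upper:
  "smoothed \<tau> (x + h) \<le> smoothed \<sigma> x + smoothed_gradient \<sigma> x \<bullet> h + (\<tau> - \<sigma>) * radius_slope \<sigma> x
    + L / 2 * ((norm h)\<^sup>2 + (\<tau> - \<sigma>)\<^sup>2 * real DIM('a) / 2)"
proof -
  define c where "c = \<tau> - \<sigma>"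
  define q where "q u = L / 2 * ((norm h)\<^sup>2 + 2 * c * (h \<bullet> u) + c\<^sup>2 * (norm u)\<^sup>2)" for u
  have pointwise: "f (x + h + \<tau> *\<^sub>R u) \<le> f (x + \<sigma> *\<^sub>R u) + D (x + \<sigma> *\<^sub>R u) \<bullet> (h + c *\<^sub>R u) + q u" for u
  proof -
    have "(norm (h + c *\<^sub>R u))\<^sup>2 = (norm h)\<^sup>2 + 2 * c * (h \<bullet> u) + c\<^sup>2 * (norm u)\<^sup>2"
      unfolding power2_norm_eq_inner
      by (simp add: inner_commute[of u h] power2_eq_square algebra_simps)
    then have "q u = L / 2 * (norm (h + c *\<^sub>R u))\<^sup>2"
      by (simp add: q_def)
    moreover have step: "x + h + \<tau> *\<^sub>R u - (x + \<sigma> *\<^sub>R u) = h + c *\<^sub>R u"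
      by (simp add: c_def algebra_simps)
    have "f (x + h + \<tau> *\<^sub>R u) \<le> f (x + \<sigma> *\<^sub>R u) + D (x + \<sigma> *\<^sub>R u) \<bullet> (h + c *\<^sub>R u) + L / 2 * (norm (h + c *\<^sub>R u))\<^sup>2"
      using quadratic_upper_bound[of "x + h + \<tau> *\<^sub>R u" "x + \<sigma> *\<^sub>R u"] unfolding step .
    ultimately show ?thesis by linarith
  qed
  have integrable_q: "integrable gauss_measure q"
    and integral_q: "integral\<^sup>L gauss_measure q = L / 2 * ((norm h)\<^sup>2 + c\<^sup>2 * real DIM('a) / 2)"
    by (simp_all add: q_def[abs_def])
  have "smoothed \<tau> (x + h)
      \<le> integral\<^sup>L gauss_measure (\<lambda>u. (f (x + \<sigma> *\<^sub>R u) + D (x + \<sigma> *\<^sub>R u) \<bullet> (h + c *\<^sub>R u)) + q u)"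
    unfolding smoothed_def
    using pointwise
    by (intro integral_mono integrable_f_shift Bochner_Integration.integrable_add integrable_first_order
        integrable_q) (simp add: add.assoc)
  also have "\<dots> = smoothed \<sigma> x + smoothed_gradient \<sigma> x \<bullet> h + c * radius_slope \<sigma> x + integral\<^sup>L gauss_measure q"
    by (simp add: Bochner_Integration.integral_add[OF integrable_first_order integrable_q] integral_first_order)
  finally show ?thesis
    by (simp add: integral_q c_def)
qed

lemma smoothed_zero[simp]: "smoothed 0 x = f x"
  by (simp add: smoothed_def)

lemma radius_slope_zero[simp]: "radius_slope 0 x = 0"
  by (simp add: radius_slope_def)

lemma le_smoothed: "f x \<le> smoothed \<sigma> x"
  using smoothed_first_order_lower[of 0 x 0 \<sigma>] by simp

lemma smoothed_le: "smoothed \<sigma> x \<le> f x + L * real DIM('a) * \<sigma>\<^sup>2 / 4"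
  using smoothed_first_order_upper[of \<sigma> x 0 0] by (simp add: mult_ac)

lemma smoothed_tangent_lower: "smoothed \<sigma> x + smoothed_gradient \<sigma> x \<bullet> h \<le> smoothed \<sigma> (x + h)"
  using smoothed_first_order_lower[of \<sigma> x h \<sigma>] by simp

lemma smoothed_quadratic_upper:
  "smoothed \<sigma> (x + h) \<le> smoothed \<sigma> x + smoothed_gradient \<sigma> x \<bullet> h + L / 2 * (norm h)\<^sup>2"
  using smoothed_first_order_upper[of \<sigma> x h \<sigma>] by simp

lemma grad_gauss_smooth:
  assumes "\<sigma> \<noteq> 0"
  shows "grad (gauss_smooth f \<sigma>) x = smoothed_gradient \<sigma> x"
proof -
  have "gauss_smooth f \<sigma> = smoothed \<sigma>"
    using assms by (simp add: fun_eq_iff gauss_smooth_eq_integral_gauss_measure smoothed_def)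
  then show ?thesis
    using grad_eqI[OF has_derivative_of_quadratic_sandwich[OF smoothed_tangent_lower smoothed_quadratic_upper]]
    by simp
qed

lemma
  shows radius_slope_nonneg: "0 \<le> \<sigma> * radius_slope \<sigma> x"
    and radius_slope_le: "\<sigma> * radius_slope \<sigma> x \<le> L * \<sigma>\<^sup>2 * real DIM('a) / 2"
proof -
  define P where "P u = (D (x + \<sigma> *\<^sub>R u) - D x) \<bullet> (\<sigma> *\<^sub>R u)" for u
  have integrable_P: "integrable gauss_measure P"
    and integral_P: "integral\<^sup>L gauss_measure P = \<sigma> * radius_slope \<sigma> x"
    using integrable_D_shift_inner
    by (simp_all add: P_def[abs_def] radius_slope_def inner_diff_left)
  have "0 \<le> P u" for u
    using convex_on_gradient_monotone[OF convex has_derivative, of "x + \<sigma> *\<^sub>R u" x] by (simp add: P_def)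
  then have "0 \<le> integral\<^sup>L gauss_measure P"
    by (intro integral_nonneg_AE AE_I2)
  then show "0 \<le> \<sigma> * radius_slope \<sigma> x"
    using integral_P by simp
  have P_le: "P u \<le> L * \<sigma>\<^sup>2 * (norm u)\<^sup>2" for u
  proof -
    have "P u \<le> norm (D (x + \<sigma> *\<^sub>R u) - D x) * norm (\<sigma> *\<^sub>R u)"
      unfolding P_def by (rule norm_cauchy_schwarz)
    also have "\<dots> \<le> L * norm (\<sigma> *\<^sub>R u) * norm (\<sigma> *\<^sub>R u)"
      using lipschitz[of "x + \<sigma> *\<^sub>R u" x] by (intro mult_right_mono) auto
    finally show ?thesis
      by (simp add: power2_eq_square mult_ac)
  qed
  have "integral\<^sup>L gauss_measure P \<le> integral\<^sup>L gauss_measure (\<lambda>u::'a. L * \<sigma>\<^sup>2 * (norm u)\<^sup>2)"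
    by (rule Bochner_Integration.integral_mono) (simp_all add: integrable_P P_le)
  then show "\<sigma> * radius_slope \<sigma> x \<le> L * \<sigma>\<^sup>2 * real DIM('a) / 2"
    using integral_P by simp
qed

lemma smoothed_radius_change:
  assumes "0 < \<sigma>" "0 < \<tau>"
  shows "smoothed \<tau> x \<le> smoothed \<sigma> x + L * real DIM('a) / 4 * max 0 (\<tau>\<^sup>2 - \<sigma>\<^sup>2)"
proof (cases "\<sigma> \<le> \<tau>")
  case True
  have "\<sigma> * radius_slope \<sigma> x \<le> \<sigma> * (L * \<sigma> * real DIM('a) / 2)"
    using radius_slope_le[of \<sigma> x] by (simp add: power2_eq_square mult_ac)
  then have "radius_slope \<sigma> x \<le> L * \<sigma> * real DIM('a) / 2"
    using \<open>0 < \<sigma>\<close> by (rule mult_left_le_imp_le)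
  then have "(\<tau> - \<sigma>) * radius_slope \<sigma> x \<le> (\<tau> - \<sigma>) * (L * \<sigma> * real DIM('a) / 2)"
    using True by (intro mult_left_mono) auto
  moreover have "max 0 (\<tau>\<^sup>2 - \<sigma>\<^sup>2) = \<tau>\<^sup>2 - \<sigma>\<^sup>2"
    using True \<open>0 < \<sigma>\<close> power_mono[of \<sigma> \<tau> 2] by simp
  moreover have "(\<tau> - \<sigma>) * (L * \<sigma> * real DIM('a) / 2) + L / 2 * ((\<tau> - \<sigma>)\<^sup>2 * real DIM('a) / 2)
      = L * real DIM('a) / 4 * (\<tau>\<^sup>2 - \<sigma>\<^sup>2)"
    by (simp add: power2_eq_square field_simps)
  moreover have "smoothed \<tau> x \<le> smoothed \<sigma> x + (\<tau> - \<sigma>) * radius_slope \<sigma> x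
      + L / 2 * ((\<tau> - \<sigma>)\<^sup>2 * real DIM('a) / 2)"
    using smoothed_first_order_upper[of \<tau> x 0 \<sigma>] by simp
  ultimately show ?thesis by linarith
next
  case False
  then have "0 \<le> (\<sigma> - \<tau>) * radius_slope \<tau> x"
    using radius_slope_nonneg[of \<tau> x] \<open>0 < \<tau>\<close> by (simp add: zero_le_mult_iff)
  moreover have "0 \<le> L * real DIM('a) / 4 * max 0 (\<tau>\<^sup>2 - \<sigma>\<^sup>2)"
    using L_nonneg by simp
  moreover have "smoothed \<tau> x + (\<sigma> - \<tau>) * radius_slope \<tau> x \<le> smoothed \<sigma> x"
    using smoothed_first_order_lower[of \<tau> x 0 \<sigma>] by simp
  ultimately show ?thesis by linarith
qed

lemma gradient_descent_smoothed_bound: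
  fixes \<sigma> :: "nat \<Rightarrow> real" and x :: "nat \<Rightarrow> 'a"
  assumes iterate: "\<And>j. x (Suc j) = x j - t *\<^sub>R smoothed_gradient (\<sigma> (Suc j)) (x j)"
    and \<sigma>_pos: "\<And>n. 1 \<le> n \<Longrightarrow> 0 < \<sigma> n"
    and "0 < t" "L * t \<le> 1" "1 \<le> k"
  shows "real k * (f (x k) - f z) \<le> (norm (x 0 - z))\<^sup>2 / (2 * t)
    + L * real DIM('a) / 4 * ((\<Sum>i=1..k. (\<sigma> i)\<^sup>2) + (\<Sum>i=2..k. real i * max 0 ((\<sigma> i)\<^sup>2 - (\<sigma> (i - 1))\<^sup>2)))"
proof -
  define d where "d = real DIM('a)"
  define g where "g i = smoothed (\<sigma> i)" for i
  define c where "c i = L * d / 4 * max 0 ((\<sigma> i)\<^sup>2 - (\<sigma> (i - 1))\<^sup>2)" for i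
  note step = gradient_step_bounds[OF smoothed_tangent_lower smoothed_quadratic_upper \<open>0 < t\<close> \<open>L * t \<le> 1\<close>]
  have "real k * g k (x k) \<le> (\<Sum>i=1..k. g i z) + (norm (x 0 - z))\<^sup>2 / (2 * t) + (\<Sum>i=2..k. real i * c i)"
  proof (rule telescoping_descent_bound[OF _ _ _ _ \<open>0 < t\<close> \<open>1 \<le> k\<close>])
    show "g (Suc j) (x (Suc j)) \<le> g (Suc j) (x j)" for j
    proof -
      have "0 \<le> t / 2 * (norm (smoothed_gradient (\<sigma> (Suc j)) (x j)))\<^sup>2"
        using \<open>0 < t\<close> by simp
      with step(1)[of "\<sigma> (Suc j)" "x j"] show ?thesis
        unfolding g_def iterate by linarith
    qed
    show "g (Suc j) (x (Suc j)) \<le> g (Suc j) z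
        + ((norm (x j - z))\<^sup>2 - (norm (x (Suc j) - z))\<^sup>2) / (2 * t)" for j
      using step(2)[of "\<sigma> (Suc j)" "x j"] by (simp add: g_def iterate)
    show "g (Suc i) y \<le> g i y + c (Suc i)" if "1 \<le> i" for i y
      using smoothed_radius_change[of "\<sigma> i" "\<sigma> (Suc i)" y] \<sigma>_pos that by (simp add: g_def c_def d_def)
    show "0 \<le> c i" for i
      using L_nonneg by (simp add: c_def d_def)
  qed
  moreover have "real k * f (x k) \<le> real k * g k (x k)"
    by (simp add: g_def le_smoothed mult_left_mono)
  moreover have "(\<Sum>i=1..k. g i z) \<le> (\<Sum>i=1..k. f z + L * d / 4 * (\<sigma> i)\<^sup>2)"
    using smoothed_le by (intro sum_mono) (simp add: g_def d_def mult_ac)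
  ultimately show ?thesis
    by (simp add: c_def d_def sum.distrib sum_distrib_left right_diff_distrib distrib_left mult_ac)
qed

end

theorem theorem3p1:
  fixes f :: "'a::euclidean_space \<Rightarrow> real"
    and L t :: real
    and \<sigma> :: "nat \<Rightarrow> real"
    and x :: "nat \<Rightarrow> 'a"
    and xstar :: 'a
    and k :: nat
  assumes conv: "convex_on UNIV f"
    and smooth: "L_smooth L f"
    and Lpos: "L > 0"
    and minim: "\<forall>y. f xstar \<le> f y"
    and sigpos: "\<forall>n\<ge>1. \<sigma> n > 0"
    and tpos: "0 < t" and tle: "t \<le> 1 / L"
    and iter: "\<forall>j. x (Suc j) = x j - t *\<^sub>R grad (gauss_smooth f (\<sigma> (Suc j))) (x j)"
    and k1: "k \<ge> 1"
  shows "f (x k) - f xstar \<le>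
           (norm (x 0 - xstar))\<^sup>2 / (2 * t * real k)
           + L * real DIM('a) / (4 * real k) *
             ((\<Sum>i=1..k. (\<sigma> i)\<^sup>2) +
              (\<Sum>i=2..k. real i * max 0 ((\<sigma> i)\<^sup>2 - (\<sigma> (i - 1))\<^sup>2)))"
proof -
  interpret convex_lipschitz_gradient f "grad f" L
    using conv smooth Lpos by unfold_locales (auto simp: L_smooth_def intro: grad_has_derivative)
  have \<sigma>_pos: "0 < \<sigma> n" if "1 \<le> n" for n
    using sigpos that by simp
  have x_Suc: "x (Suc j) = x j - t *\<^sub>R smoothed_gradient (\<sigma> (Suc j)) (x j)" for j
    using iter grad_gauss_smooth \<sigma>_pos[of "Suc j"] by simp
  have "L * t \<le> 1"
    using tle Lpos by (simp add: field_simps)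
  from gradient_descent_smoothed_bound[where \<sigma> = \<sigma> and x = x and z = xstar, OF x_Suc \<sigma>_pos tpos this k1]
  show ?thesis
    using k1 tpos by (simp add: field_simps)
qed

end
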